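(* Let $\Gamma$ be a discrete group and $X$ a compact $\Gamma$-space. Then: (i) $X_0^0=\left(\bigcup_{g\in\Gamma}\partial(\operatorname{int}X^g)\right)^{c}$; (ii) if $\Gamma$ is countable, then $X_0^0$ is a dense $G_\delta$ subset of $X$; (iii) $\{x\in X:\Gamma_x=\Gamma_x^0\}\subseteq X_0^0$; (iv) $X_0^0=X$ if and only if $\operatorname{int}X^g$ is closed for all $g\in\Gamma$.
   Context: A compact $\Gamma$-space is a compact Hausdorff space with an action of $\Gamma$ by homeomorphisms. $X^g=\{x:gx=x\}$, $\partial$ denotes topological boundary, $\Gamma_x=\{g:gx=x\}$, and $\Gamma_x^0=\{g: g\text{ fixes pointwise an open neighborhood of } x\}$. $\operatorname{Sub}(\Gamma)$ is the space of subgroups of $\Gamma$ with the Chabauty topology (induced from the product topology on $\{0,1\}^\Gamma$ via characteristic functions), and $X_0^0$ is the set of points of $X$ at which the map $X\to\operatorname{Sub}(\Gamma)$, $x\mapsto\Gamma_x^0$, is continuous. *)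

theory Defs
  imports "HOL-Analysis.Analysis" "HOL-Algebra.Group"
begin

definition homeo_action :: "('g, 'b) monoid_scheme \<Rightarrow> 'a topology \<Rightarrow> ('g \<Rightarrow> 'a \<Rightarrow> 'a) \<Rightarrow> bool" where
  "homeo_action G X act \<longleftrightarrow> group G
     \<and> (\<forall>g\<in>carrier G. homeomorphic_map X X (act g))
     \<and> (\<forall>x\<in>topspace X. act \<one>\<^bsub>G\<^esub> x = x)
     \<and> (\<forall>g\<in>carrier G. \<forall>h\<in>carrier G. \<forall>x\<in>topspace X. act (g \<otimes>\<^bsub>G\<^esub> h) x = act g (act h x))"

definition fixset :: "'a topology \<Rightarrow> ('g \<Rightarrow> 'a \<Rightarrow> 'a) \<Rightarrow> 'g \<Rightarrow> 'a set" where
  "fixset X act g = {x \<in> topspace X. act g x = x}"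

definition stab :: "('g, 'b) monoid_scheme \<Rightarrow> ('g \<Rightarrow> 'a \<Rightarrow> 'a) \<Rightarrow> 'a \<Rightarrow> 'g set" where
  "stab G act x = {g \<in> carrier G. act g x = x}"

definition stab0 :: "('g, 'b) monoid_scheme \<Rightarrow> 'a topology \<Rightarrow> ('g \<Rightarrow> 'a \<Rightarrow> 'a) \<Rightarrow> 'a \<Rightarrow> 'g set" where
  "stab0 G X act x = {g \<in> carrier G. \<exists>U. openin X U \<and> x \<in> U \<and> (\<forall>y\<in>U. act g y = y)}"

definition charfun :: "('g, 'b) monoid_scheme \<Rightarrow> 'g set \<Rightarrow> ('g \<Rightarrow> bool)" where
  "charfun G H = restrict (\<lambda>g. g \<in> H) (carrier G)"

text \<open>Sub(Gamma) with the Chabauty topology: subspace of the product topology on {0,1}^Gamma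
  consisting of characteristic functions of subgroups.\<close>
definition chabauty :: "('g, 'b) monoid_scheme \<Rightarrow> ('g \<Rightarrow> bool) topology" where
  "chabauty G = subtopology (product_topology (\<lambda>g. discrete_topology (UNIV :: bool set)) (carrier G))
                  (charfun G ` {H. subgroup H G})"

definition continuous_at_point :: "'a topology \<Rightarrow> 'c topology \<Rightarrow> ('a \<Rightarrow> 'c) \<Rightarrow> 'a \<Rightarrow> bool" where
  "continuous_at_point X Y f x \<longleftrightarrow>
     (\<forall>V. openin Y V \<and> f x \<in> V \<longrightarrow> (\<exists>U. openin X U \<and> x \<in> U \<and> f ` U \<subseteq> V))"

definition X00 :: "('g, 'b) monoid_scheme \<Rightarrow> 'a topology \<Rightarrow> ('g \<Rightarrow> 'a \<Rightarrow> 'a) \<Rightarrow> 'a set" where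
  "X00 G X act = {x \<in> topspace X.
     continuous_at_point X (chabauty G) (\<lambda>y. charfun G (stab0 G X act y)) x}"

end

theory Submission
  imports Defs
begin

text \<open>
  Since \<open>\<Gamma>\<^sub>y\<^sup>0 = {g. y \<in> int X\<^sup>g}\<close> and the Chabauty topology on \<open>Sub(\<Gamma>)\<close> is the topology of
  pointwise convergence of characteristic functions, \<open>y \<mapsto> \<Gamma>\<^sub>y\<^sup>0\<close> is continuous at \<open>x\<close> iff
  for each \<open>g\<close> the membership \<open>y \<in> int X\<^sup>g\<close> is locally constant near \<open>x\<close>, i.e. iff \<open>x\<close> lies on
  no frontier \<open>\<partial>(int X\<^sup>g)\<close>. Frontiers of open sets are closed and nowhere dense, so for
  countable \<open>\<Gamma>\<close> the Baire category theorem in the compact Hausdorff space \<open>X\<close> gives (ii).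
  A point of \<open>\<partial>(int X\<^sup>g)\<close> lies in the closed set \<open>X\<^sup>g\<close> but not in \<open>int X\<^sup>g\<close>, so \<open>g \<in> \<Gamma>\<^sub>x - \<Gamma>\<^sub>x\<^sup>0\<close>;
  this gives (iii). Finally \<open>int X\<^sup>g\<close> is open, so its frontier is empty iff it is closed.
\<close>

lemma locally_constant_membership_iff_notin_frontier_of:
  assumes "x \<in> topspace X"
  shows "(\<exists>U. openin X U \<and> x \<in> U \<and> (\<forall>y\<in>U. y \<in> T \<longleftrightarrow> x \<in> T)) \<longleftrightarrow> x \<notin> X frontier_of T"
proof (cases "x \<in> T")
  case True
  then have "x \<in> X closure_of T"
    using assms closure_of_subset_Int by fastforce
  then show ?thesis
    using True by (auto simp: frontier_of_def interior_of_def)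
next
  case False
  then have "x \<notin> X interior_of T"
    using interior_of_subset by fastforce
  then show ?thesis
    using assms False by (auto simp: frontier_of_def in_closure_of)
qed

lemma continuous_at_point_subtopology_product_discrete_iff:
  fixes f :: "'a \<Rightarrow> 'i \<Rightarrow> 'c"
  assumes f: "f ` topspace X \<subseteq> S" and S: "S \<subseteq> extensional I" and x: "x \<in> topspace X"
  shows "continuous_at_point X (subtopology (product_topology (\<lambda>i. discrete_topology UNIV) I) S) f x
    \<longleftrightarrow> (\<forall>i\<in>I. \<exists>U. openin X U \<and> x \<in> U \<and> (\<forall>y\<in>U. f y i = f x i))"
    (is "continuous_at_point X (subtopology ?P S) f x \<longleftrightarrow> _")
proof
  assume cont: "continuous_at_point X (subtopology ?P S) f x"
  show "\<forall>i\<in>I. \<exists>U. openin X U \<and> x \<in> U \<and> (\<forall>y\<in>U. f y i = f x i)"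
  proof
    fix i assume i: "i \<in> I"
    define V where "V = S \<inter> {h \<in> topspace ?P. h i \<in> {f x i}}"
    have "openin ?P {h \<in> topspace ?P. h i \<in> {f x i}}"
      by (rule openin_continuous_map_preimage[OF continuous_map_product_projection[OF i]]) simp
    then have "openin (subtopology ?P S) V"
      unfolding V_def by (rule openin_subtopology_Int2)
    moreover have "f x \<in> V"
      using f S x by (auto simp: V_def PiE_def)
    ultimately obtain U where "openin X U" "x \<in> U" "f ` U \<subseteq> V"
      using cont unfolding continuous_at_point_def by meson
    then show "\<exists>U. openin X U \<and> x \<in> U \<and> (\<forall>y\<in>U. f y i = f x i)"
      by (auto simp: V_def)
  qed
next
  assume const: "\<forall>i\<in>I. \<exists>U. openin X U \<and> x \<in> U \<and> (\<forall>y\<in>U. f y i = f x i)"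
  show "continuous_at_point X (subtopology ?P S) f x"
    unfolding continuous_at_point_def
  proof (intro allI impI)
    fix V assume "openin (subtopology ?P S) V \<and> f x \<in> V"
    then obtain W where W: "openin ?P W" "V = S \<inter> W" "f x \<in> W"
      by (auto simp: openin_subtopology)
    then obtain B where B: "finite {i \<in> I. B i \<noteq> UNIV}" "f x \<in> PiE I B" "PiE I B \<subseteq> W"
      unfolding openin_product_topology_alt by auto
    define F where "F = {i \<in> I. B i \<noteq> UNIV}"
    have const_F: "\<forall>i\<in>F. \<exists>U. openin X U \<and> x \<in> U \<and> (\<forall>y\<in>U. f y i = f x i)"
      using const by (simp add: F_def)
    obtain U where U: "\<forall>i\<in>F. openin X (U i) \<and> x \<in> U i \<and> (\<forall>y\<in>U i. f y i = f x i)"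
      using bchoice[OF const_F] by blast
    define U0 where "U0 = (\<Inter>i\<in>F. U i) \<inter> topspace X"
    have "openin X U0"
      unfolding U0_def using B(1) U by (intro openin_INT) (auto simp: F_def)
    moreover have "f y \<in> V" if y: "y \<in> U0" for y
    proof -
      have "f y \<in> extensional I"
        using f S y unfolding U0_def by blast
      moreover have "f y i \<in> B i" if "i \<in> I" for i
      proof (cases "i \<in> F")
        case True
        then have "f y i = f x i"
          using U y unfolding U0_def by blast
        then show ?thesis
          using B(2) that by (simp add: PiE_mem)
      next
        case False
        then show ?thesis
          using that by (simp add: F_def)
      qed
      ultimately have "f y \<in> PiE I B"
        by (simp add: PiE_iff)
      then show ?thesis
        using W(2) B(3) f y by (auto simp: U0_def)
    qed
    ultimately show "\<exists>U. openin X U \<and> x \<in> U \<and> f ` U \<subseteq> V"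
      using U x by (auto simp: U0_def intro!: exI[of _ U0])
  qed
qed

lemma interior_of_frontier_of_openin:
  assumes "openin X S"
  shows "X interior_of (X frontier_of S) = {}"
proof -
  let ?T = "X interior_of (X frontier_of S)"
  have sub: "?T \<subseteq> X closure_of S - S"
    using interior_of_subset frontier_of_openin[OF assms] by metis
  then have "?T \<inter> S = {}"
    by auto
  then have "?T \<inter> X closure_of S = {}"
    by (simp only: openin_Int_closure_of_eq_empty[OF openin_interior_of])
  then show ?thesis
    using sub by auto
qed

lemma stab0_eq_interior_of_fixset:
  "stab0 G X act y = {g \<in> carrier G. y \<in> X interior_of fixset X act g}"
  unfolding stab0_def interior_of_def fixset_def
  by (auto dest: openin_subset)

lemma closedin_fixset:
  assumes "homeo_action G X act" "Hausdorff_space X" "g \<in> carrier G"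
  shows "closedin X (fixset X act g)"
proof -
  have "continuous_map X X (act g)"
    using assms homeomorphic_imp_continuous_map unfolding homeo_action_def by blast
  then show ?thesis
    using closedin_continuous_maps_eq[OF assms(2) _ continuous_map_id]
    unfolding fixset_def id_def by blast
qed

lemma subgroup_stab0:
  fixes G (structure)
  assumes A: "homeo_action G X act" and y: "y \<in> topspace X"
  shows "subgroup (stab0 G X act y) G"
proof -
  interpret group G
    using A by (simp add: homeo_action_def)
  have one: "\<And>x. x \<in> topspace X \<Longrightarrow> act \<one> x = x"
    and mult: "\<And>g h x. \<lbrakk>g \<in> carrier G; h \<in> carrier G; x \<in> topspace X\<rbrakk> \<Longrightarrow>
                 act (g \<otimes> h) x = act g (act h x)"
    using A by (auto simp: homeo_action_def)
  show ?thesis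
  proof
    show "stab0 G X act y \<subseteq> carrier G"
      by (auto simp: stab0_def)
    show "\<one> \<in> stab0 G X act y"
      using one y by (auto simp: stab0_def intro!: exI[of _ "topspace X"])
  next
    fix g h assume "g \<in> stab0 G X act y" "h \<in> stab0 G X act y"
    then obtain U W where U: "openin X U" "y \<in> U" "\<forall>z\<in>U. act g z = z"
      and W: "openin X W" "y \<in> W" "\<forall>z\<in>W. act h z = z" and gh: "g \<in> carrier G" "h \<in> carrier G"
      by (auto simp: stab0_def)
    then have "\<forall>z\<in>U \<inter> W. act (g \<otimes> h) z = z"
      using mult openin_subset[OF U(1)] by auto
    then show "g \<otimes> h \<in> stab0 G X act y"
      using U W gh by (auto simp: stab0_def intro!: exI[of _ "U \<inter> W"])
  next
    fix g assume "g \<in> stab0 G X act y"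
    then obtain U where U: "openin X U" "y \<in> U" "\<forall>z\<in>U. act g z = z" and g: "g \<in> carrier G"
      by (auto simp: stab0_def)
    have "act (inv g) z = z" if z: "z \<in> U" for z
    proof -
      have zX: "z \<in> topspace X"
        using z openin_subset[OF U(1)] by blast
      have "z = act (inv g \<otimes> g) z"
        using one g zX by simp
      also have "\<dots> = act (inv g) (act g z)"
        using mult[of "inv g" g z] g zX by simp
      also have "\<dots> = act (inv g) z"
        using U(3) z by simp
      finally show ?thesis ..
    qed
    then show "inv g \<in> stab0 G X act y"
      using U g by (auto simp: stab0_def intro!: exI[of _ U])
  qed
qed

lemma X00_eq_topspace_diff_frontiers:
  assumes A: "homeo_action G X act"
  shows "X00 G X act = topspace X - (\<Union>g\<in>carrier G. X frontier_of (X interior_of fixset X act g))"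
proof -
  define f where "f y = charfun G (stab0 G X act y)" for y
  have f: "f ` topspace X \<subseteq> charfun G ` {H. subgroup H G}"
    using subgroup_stab0[OF A] by (auto simp: f_def)
  have ext: "charfun G ` {H. subgroup H G} \<subseteq> extensional (carrier G)"
    by (auto simp: charfun_def)
  have coord: "f y g = (y \<in> X interior_of fixset X act g)" if "g \<in> carrier G" for g y
    using that by (simp add: f_def charfun_def stab0_eq_interior_of_fixset)
  have "x \<in> X00 G X act \<longleftrightarrow> (\<forall>g\<in>carrier G. x \<notin> X frontier_of (X interior_of fixset X act g))"
    if x: "x \<in> topspace X" for x
  proof -
    have "x \<in> X00 G X act \<longleftrightarrow>
          (\<forall>g\<in>carrier G. \<exists>U. openin X U \<and> x \<in> U \<and> (\<forall>y\<in>U. f y g = f x g))"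
      using x by (simp add: X00_def chabauty_def f_def [symmetric]
          continuous_at_point_subtopology_product_discrete_iff[OF f ext x])
    also have "\<dots> \<longleftrightarrow> (\<forall>g\<in>carrier G. \<exists>U. openin X U \<and> x \<in> U \<and>
          (\<forall>y\<in>U. y \<in> X interior_of fixset X act g \<longleftrightarrow> x \<in> X interior_of fixset X act g))"
      by (rule ball_cong) (simp_all add: coord)
    also have "\<dots> \<longleftrightarrow> (\<forall>g\<in>carrier G. x \<notin> X frontier_of (X interior_of fixset X act g))"
      by (simp add: locally_constant_membership_iff_notin_frontier_of[OF x])
    finally show ?thesis .
  qed
  then show ?thesis
    by (auto simp: X00_def)
qed

lemma X00_dense_gdelta:
  assumes A: "homeo_action G X act" and "locally_compact_space X" "regular_space X"
    and "countable (carrier G)"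
  shows "gdelta_in X (X00 G X act) \<and> X closure_of (X00 G X act) = topspace X"
proof -
  define V where "V g = topspace X - X frontier_of (X interior_of fixset X act g)" for g
  have ne: "carrier G \<noteq> {}"
    using A group.is_monoid monoid.one_closed by (fastforce simp: homeo_action_def)
  have X00: "X00 G X act = \<Inter> (V ` carrier G)"
    using X00_eq_topspace_diff_frontiers[OF A] ne by (auto simp: V_def)
  have opn: "openin X (V g)" for g
    by (simp add: V_def closedin_frontier_of openin_diff)
  have dense: "X closure_of (V g) = topspace X" for g
    by (simp add: V_def closure_of_complement interior_of_frontier_of_openin)
  have "gdelta_in X (\<Inter> (V ` carrier G))"
    using assms(4) ne opn by (intro gdelta_in_Inter) (auto intro: open_imp_gdelta_in)
  moreover have "X closure_of (\<Inter> (V ` carrier G)) = topspace X"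
    using assms(2-4) opn dense by (intro Baire_category) auto
  ultimately show ?thesis
    by (simp add: X00)
qed

lemma stab_eq_stab0_imp_X00:
  assumes A: "homeo_action G X act" and "Hausdorff_space X"
    and x: "x \<in> topspace X" "stab G act x = stab0 G X act x"
  shows "x \<in> X00 G X act"
proof -
  have "x \<notin> X frontier_of (X interior_of fixset X act g)" if g: "g \<in> carrier G" for g
  proof
    assume fr: "x \<in> X frontier_of (X interior_of fixset X act g)"
    then have "x \<notin> X interior_of fixset X act g"
      by (simp add: frontier_of_def interior_of_interior_of)
    then have "g \<notin> stab G act x"
      using x g by (simp add: stab0_eq_interior_of_fixset)
    then have "act g x \<noteq> x"
      using g by (simp add: stab_def)
    have "x \<in> X closure_of (X interior_of fixset X act g)"
      using fr by (simp add: frontier_of_def)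
    also have "\<dots> \<subseteq> X closure_of (fixset X act g)"
      by (simp add: closure_of_mono interior_of_subset)
    also have "\<dots> = fixset X act g"
      using closedin_fixset[OF A assms(2) g] by (simp add: closure_of_eq)
    finally show False
      using \<open>act g x \<noteq> x\<close> by (simp add: fixset_def)
  qed
  then show ?thesis
    using x by (simp add: X00_eq_topspace_diff_frontiers[OF A])
qed

lemma X00_eq_topspace_iff:
  assumes "homeo_action G X act"
  shows "X00 G X act = topspace X \<longleftrightarrow> (\<forall>g\<in>carrier G. closedin X (X interior_of fixset X act g))"
proof -
  have "X00 G X act = topspace X \<longleftrightarrow>
        (\<forall>g\<in>carrier G. X frontier_of (X interior_of fixset X act g) = {})"
    unfolding X00_eq_topspace_diff_frontiers[OF assms]
    using frontier_of_subset_topspace by fastforce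
  then show ?thesis
    by (simp add: frontier_of_eq_empty interior_of_subset_topspace)
qed

theorem mainTheorem8:
  fixes G :: "('g, 'b) monoid_scheme" and X :: "'a topology" and act :: "'g \<Rightarrow> 'a \<Rightarrow> 'a"
  assumes "homeo_action G X act"
    and "compact_space X" and "Hausdorff_space X"
  shows "X00 G X act = topspace X - (\<Union>g\<in>carrier G. X frontier_of (X interior_of fixset X act g))
    \<and> (countable (carrier G) \<longrightarrow>
           gdelta_in X (X00 G X act) \<and> X closure_of (X00 G X act) = topspace X)
    \<and> {x \<in> topspace X. stab G act x = stab0 G X act x} \<subseteq> X00 G X act
    \<and> (X00 G X act = topspace X \<longleftrightarrow>
           (\<forall>g\<in>carrier G. closedin X (X interior_of fixset X act g)))"
proof (intro conjI)
  show "X00 G X act = topspace X - (\<Union>g\<in>carrier G. X frontier_of (X interior_of fixset X act g))"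
    by (rule X00_eq_topspace_diff_frontiers[OF assms(1)])
  show "countable (carrier G) \<longrightarrow>
          gdelta_in X (X00 G X act) \<and> X closure_of (X00 G X act) = topspace X"
    using X00_dense_gdelta[OF assms(1)] assms(2,3)
      compact_imp_locally_compact_space compact_Hausdorff_imp_regular_space by blast
  show "{x \<in> topspace X. stab G act x = stab0 G X act x} \<subseteq> X00 G X act"
    using stab_eq_stab0_imp_X00[OF assms(1,3)] by blast
  show "X00 G X act = topspace X \<longleftrightarrow> (\<forall>g\<in>carrier G. closedin X (X interior_of fixset X act g))"
    by (rule X00_eq_topspace_iff[OF assms(1)])
qed

end
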